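(* Let $h>0$, $P>0$, $0<\zeta\le1$, $\sigma_A^2>0$, $\sigma_{\rm cov}^2>0$, $P_S>0$, and $Q\in[0,\zeta hP)$. Define $$a=\sigma_{\rm cov}^2-\frac{\sigma_A^2P_S}{\zeta hP},\quad b=\sigma_A^2\Big(1-\frac{Q}{\zeta hP}\Big),\quad c=-\frac{P_S}{\zeta},\quad d=hP\Big(1-\frac{Q}{\zeta hP}\Big),$$ and $$R(s)=s\log_2\!\Big(1+\frac{cs+d}{as+b}\Big).$$ Then $R$ is (well defined and) concave on the interval $s\in\Big[\frac{d}{hP-c},\ \min\{-\frac dc,1\}\Big]$.
   Context: $R(s)$ is the rate achieved on the boundary of the OPS rate-energy region of a separated receiver with circuit power $P_S$ when the harvested net energy equals $Q$, as a function of $s=1-\alpha$, the fraction of time the information decoder is on; $\sigma_A^2$ is antenna noise power, $\sigma_{\rm cov}^2$ conversion noise power, $\zeta$ harvesting efficiency, $hP$ the received power. *)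

theory Defs
  imports "HOL-Analysis.Analysis"
begin

end

theory Submission
  imports Defs "HOL-Analysis.Analysis"
begin

(* On the interval of interest both the numerator (a + c) s + (b + d) and the
   denominator a s + b of the SNR term 1 + (c s + d) / (a s + b) are positive,
   so R(s) = s (ln ((a + c) s + (b + d)) - ln (a s + b)) / ln 2 there.
   For affine u = p s + q and v = a s + b the function s (ln u - ln v) has
   second derivative
       (p b - a q) / (u v) * (q / u + b / v),
   which is nonpositive as soon as q, b >= 0 and p b - a q <= 0.  Hence the
   file first proves this second-derivative identity and the resulting
   general concavity criterion, then the elementary facts about the interval
   and the specific coefficients (notably c b - a d = - sigma_cov^2 d), and
   finally derives the theorem from them. *)

lemma deriv_ln_affine:
  fixes p q s :: real
  assumes "p * s + q > 0"
  shows "((\<lambda>s. ln (p * s + q)) has_real_derivative p / (p * s + q)) (at s)"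
  using assms by (auto intro!: derivative_eq_intros)

lemma deriv_slope_ratio_affine:
  fixes p q s :: real
  assumes "p * s + q > 0"
  shows "((\<lambda>s. p / (p * s + q)) has_real_derivative - (p\<^sup>2 / (p * s + q)\<^sup>2)) (at s)"
  using assms by (auto intro!: derivative_eq_intros simp: power2_eq_square)

(* The second derivative of s (ln (p s + q) - ln (a s + b)) factors; with
   x = p/u and y = a/v it is 2 (x - y) - s (x^2 - y^2) = (x - y)(q/u + b/v). *)
lemma log_ratio_rate_second_derivative:
  fixes p q a b s :: real
  assumes u: "p * s + q \<noteq> 0" and v: "a * s + b \<noteq> 0"
  shows "2 * (p / (p * s + q) - a / (a * s + b))
           + s * ((a / (a * s + b))\<^sup>2 - (p / (p * s + q))\<^sup>2)
         = (p * b - a * q) / ((p * s + q) * (a * s + b)) * (q / (p * s + q) + b / (a * s + b))"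
proof -
  define x where "x = p / (p * s + q)"
  define y where "y = a / (a * s + b)"
  have cross: "(p * b - a * q) / ((p * s + q) * (a * s + b)) = x - y"
    using u v by (simp add: x_def y_def field_simps)
  have q_part: "q / (p * s + q) = 1 - s * x" and b_part: "b / (a * s + b) = 1 - s * y"
    using u v by (simp_all add: x_def y_def field_simps)
  have "2 * (x - y) + s * (y\<^sup>2 - x\<^sup>2) = (x - y) * ((1 - s * x) + (1 - s * y))"
    by (simp add: algebra_simps power2_eq_square)
  then show ?thesis
    unfolding cross q_part b_part x_def[symmetric] y_def[symmetric] .
qed

lemma concave_on_log_ratio_rate:
  fixes p q a b :: real and C :: "real set"
  assumes C: "convex C"
    and u_pos: "\<And>s. s \<in> C \<Longrightarrow> p * s + q > 0"
    and v_pos: "\<And>s. s \<in> C \<Longrightarrow> a * s + b > 0"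
    and q: "q \<ge> 0" and b: "b \<ge> 0" and cross: "p * b - a * q \<le> 0"
  shows "concave_on C (\<lambda>s. s * (ln (p * s + q) - ln (a * s + b)))"
proof (rule f''_le0_imp_concave[OF C])
  fix s assume s: "s \<in> C"
  note u = u_pos[OF s] and v = v_pos[OF s]
  have d_log: "((\<lambda>s. ln (p * s + q) - ln (a * s + b)) has_real_derivative
                 p / (p * s + q) - a / (a * s + b)) (at s)"
    using DERIV_diff[OF deriv_ln_affine[OF u] deriv_ln_affine[OF v]] .
  show "((\<lambda>s. s * (ln (p * s + q) - ln (a * s + b))) has_real_derivative
          (ln (p * s + q) - ln (a * s + b)) + s * (p / (p * s + q) - a / (a * s + b))) (at s)"
    using DERIV_mult[OF DERIV_ident d_log] by (simp add: mult.commute)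
  have d_slope: "((\<lambda>s. p / (p * s + q) - a / (a * s + b)) has_real_derivative
                   (a / (a * s + b))\<^sup>2 - (p / (p * s + q))\<^sup>2) (at s)"
    using DERIV_diff[OF deriv_slope_ratio_affine[OF u] deriv_slope_ratio_affine[OF v]]
    by (simp add: power_divide)
  show "((\<lambda>s. (ln (p * s + q) - ln (a * s + b)) + s * (p / (p * s + q) - a / (a * s + b)))
          has_real_derivative
          2 * (p / (p * s + q) - a / (a * s + b))
            + s * ((a / (a * s + b))\<^sup>2 - (p / (p * s + q))\<^sup>2)) (at s)"
    using DERIV_add[OF d_log DERIV_mult[OF DERIV_ident d_slope]] by (simp add: algebra_simps)
  have "(p * b - a * q) / ((p * s + q) * (a * s + b)) \<le> 0"
    using cross u v by (simp add: divide_nonpos_pos)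
  moreover have "q / (p * s + q) + b / (a * s + b) \<ge> 0"
    using q b u v by simp
  ultimately show "2 * (p / (p * s + q) - a / (a * s + b))
                     + s * ((a / (a * s + b))\<^sup>2 - (p / (p * s + q))\<^sup>2) \<le> 0"
    unfolding log_ratio_rate_second_derivative[OF u[THEN less_imp_neq, symmetric]
                                                  v[THEN less_imp_neq, symmetric]]
    by (rule mult_nonpos_nonneg)
qed

lemma concave_on_cong_pointwise:
  fixes f g :: "real \<Rightarrow> real"
  assumes "concave_on C g" and "\<And>s. s \<in> C \<Longrightarrow> f s = g s"
  shows "concave_on C f"
  using assms unfolding concave_on_def convex_on_def by (auto simp: convex_def)

lemma rate_as_log_ratio:
  fixes a b c d s :: real
  assumes v: "a * s + b > 0" and u: "(a + c) * s + (b + d) > 0"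
  shows "1 + (c * s + d) / (a * s + b) > 0"
    and "s * log 2 (1 + (c * s + d) / (a * s + b))
           = s * (ln ((a + c) * s + (b + d)) - ln (a * s + b)) / ln 2"
proof -
  have snr: "1 + (c * s + d) / (a * s + b) = ((a + c) * s + (b + d)) / (a * s + b)"
    using v by (simp add: field_simps)
  show "1 + (c * s + d) / (a * s + b) > 0"
    unfolding snr using u v by simp
  show "s * log 2 (1 + (c * s + d) / (a * s + b))
          = s * (ln ((a + c) * s + (b + d)) - ln (a * s + b)) / ln 2"
    unfolding snr log_def using u v by (simp add: ln_div)
qed

lemma rate_interval_bounds:
  fixes k c d s :: real
  assumes k: "k > 0" and c: "c < 0" and d: "d > 0"
    and s: "s \<in> {d / (k - c) .. min (- d / c) 1}"
  shows "s > 0" and "c * s + d \<ge> 0"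
proof -
  have "d / (k - c) > 0" using k c d by simp
  then show "s > 0" using s by simp
  have "s \<le> - d / c" using s by simp
  then show "c * s + d \<ge> 0" using c by (simp add: field_simps)
qed

theorem lemma1:
  fixes h P \<zeta> \<sigma>A2 \<sigma>cov2 PS Q :: real
    and a b c d :: real and R :: "real \<Rightarrow> real"
  assumes "h > 0" "P > 0" "0 < \<zeta>" "\<zeta> \<le> 1" "\<sigma>A2 > 0" "\<sigma>cov2 > 0" "PS > 0"
    and "0 \<le> Q" "Q < \<zeta> * h * P"
  defines "a \<equiv> \<sigma>cov2 - \<sigma>A2 * PS / (\<zeta> * h * P)"
    and "b \<equiv> \<sigma>A2 * (1 - Q / (\<zeta> * h * P))"
    and "c \<equiv> - PS / \<zeta>"
    and "d \<equiv> h * P * (1 - Q / (\<zeta> * h * P))"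
    and "R \<equiv> (\<lambda>s. s * log 2 (1 + (c * s + d) / (a * s + b)))"
  shows "(\<forall>s \<in> {d / (h * P - c) .. min (- d / c) 1}.
            a * s + b \<noteq> 0 \<and> 1 + (c * s + d) / (a * s + b) > 0)
         \<and> concave_on {d / (h * P - c) .. min (- d / c) 1} R"
proof -
  define I where "I = {d / (h * P - c) .. min (- d / c) 1}"
  have "1 - Q / (\<zeta> * h * P) > 0" using assms by (simp add: field_simps)
  then have b_pos: "b > 0" and d_pos: "d > 0" and c_neg: "c < 0" and hP: "h * P > 0"
    using assms by (simp_all add: b_def d_def c_def)
  (* the denominator is a positive combination of s and of c s + d *)
  have denom: "a * s + b = \<sigma>cov2 * s + \<sigma>A2 / (h * P) * (c * s + d)" for s
    using assms by (simp add: a_def b_def c_def d_def field_simps)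
  have cross: "(a + c) * b - a * (b + d) = - \<sigma>cov2 * d"
    using assms by (simp add: a_def b_def c_def d_def field_simps)
  have v_pos: "a * s + b > 0" and u_pos: "(a + c) * s + (b + d) > 0" if "s \<in> I" for s
  proof -
    note bounds = rate_interval_bounds[OF hP c_neg d_pos that[unfolded I_def]]
    show v: "a * s + b > 0"
      unfolding denom using bounds assms by (intro add_pos_nonneg) simp_all
    show "(a + c) * s + (b + d) > 0" using v bounds(2) by (simp add: algebra_simps)
  qed
  have "concave_on I (\<lambda>s. s * (ln ((a + c) * s + (b + d)) - ln (a * s + b)) / ln 2)"
  proof (intro concave_on_cdiv concave_on_log_ratio_rate)
    show "(a + c) * b - a * (b + d) \<le> 0"
      unfolding cross using \<open>\<sigma>cov2 > 0\<close> d_pos by simp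
  qed (use u_pos v_pos b_pos d_pos in \<open>simp_all add: I_def\<close>)
  then have "concave_on I R"
    by (rule concave_on_cong_pointwise) (simp add: R_def rate_as_log_ratio(2) u_pos v_pos)
  moreover have "\<forall>s \<in> I. a * s + b \<noteq> 0 \<and> 1 + (c * s + d) / (a * s + b) > 0"
    using v_pos u_pos rate_as_log_ratio(1) by (metis less_irrefl)
  ultimately show ?thesis unfolding I_def by blast
qed

end
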